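(* Let $\mathbb{G}$ be a streaming graph, $W$ a time window and $Q$ a query graph. An incoming edge $\sigma$ arriving at time $t_i$ is not discardable if and only if, in the current snapshot $\mathbb{G}_i$, there exists at least one query edge $\epsilon\in E(Q)$ such that (1) the prerequisite subquery $Preq(\epsilon)$ has at least one time-constrained match $g$ (a subgraph of $\mathbb{G}_i$) containing $\sigma$, and (2) $\sigma$ is matched to $\epsilon$ in the match relation between $g$ and $Preq(\epsilon)$. Otherwise $\sigma$ is discardable.
   Context: A streaming graph $\mathbb{G}$ is a constantly growing sequence of directed edges $\sigma_1,\sigma_2,\dots$, each with two labelled endpoints and arriving at time $t_i$ (its timestamp), $t_i<t_j$ for $i<j$. With a time window of duration $|W|$, the snapshot at current time $t$ consists of the edges with timestamps in $(t-|W|,t]$ and their endpoints. A query graph is $Q=(V(Q),E(Q),L,\prec)$: vertices, directed edges, vertex labelling $L$, and a strict partial order $\prec$ on $E(Q)$. A subgraph $g$ of the snapshot is a time-constrained match of a query (or subquery with the restricted timing order) if there is a bijection $F$ from the query vertices to $V(g)$ preserving labels, with $\overrightarrow{uv}$ a query edge iff $\overrightarrow{F(u)F(v)}\in E(g)$, and such that $\epsilon\prec\epsilon'$ implies the data edge matched to $\epsilon$ has smaller timestamp than the data edge matched to $\epsilon'$. An incoming edge $\sigma$ is discardable if $\sigma$ cannot be included in any complete time-constrained match of $Q$, no matter what edges arrive in the future. For $\epsilon\in E(Q)$, $Preq(\epsilon)=\{\epsilon' : \epsilon'\prec\epsilon\}\cup\{\epsilon\}$, and the prerequisite subquery $Preq(\epsilon)$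 is the subquery of $Q$ induced by these edges (with timing order $\prec$ restricted to them). *)

theory Defs
  imports Complex_Main
begin

type_synonym 'l dvert = "nat \<times> 'l"
type_synonym 'l dedge = "'l dvert \<times> 'l dvert \<times> real"

definition esrc :: "'l dedge \<Rightarrow> 'l dvert" where "esrc e = fst e"
definition edst :: "'l dedge \<Rightarrow> 'l dvert" where "edst e = fst (snd e)"
definition etime :: "'l dedge \<Rightarrow> real" where "etime e = snd (snd e)"
definition vlabel :: "'l dvert \<Rightarrow> 'l" where "vlabel v = snd v"

definition streaming_graph :: "(nat \<Rightarrow> 'l dedge) \<Rightarrow> bool" where
  "streaming_graph S \<longleftrightarrow> (\<forall>i. etime (S i) < etime (S (Suc i)))"

definition snapshot :: "(nat \<Rightarrow> 'l dedge) \<Rightarrow> real \<Rightarrow> nat \<Rightarrow> 'l dedge set" where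
  "snapshot S W i = {S j | j. etime (S i) - W < etime (S j) \<and> etime (S j) \<le> etime (S i)}"

definition qverts :: "('q \<times> 'q) set \<Rightarrow> 'q set" where
  "qverts Es = fst ` Es \<union> snd ` Es"

definition strict_po_on :: "('q \<times> 'q) set \<Rightarrow> (('q \<times> 'q) \<Rightarrow> ('q \<times> 'q) \<Rightarrow> bool) \<Rightarrow> bool" where
  "strict_po_on E prec \<longleftrightarrow>
     (\<forall>e e'. prec e e' \<longrightarrow> e \<in> E \<and> e' \<in> E) \<and>
     (\<forall>e. \<not> prec e e) \<and>
     (\<forall>e1 e2 e3. prec e1 e2 \<longrightarrow> prec e2 e3 \<longrightarrow> prec e1 e3)"

(* F is the vertex bijection onto V(g), M e is the data edge matched to
   query edge e, and the matched subgraph is g = M ` Es. *)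
definition tc_match :: "('q \<Rightarrow> 'l) \<Rightarrow> ('q \<times> 'q) set \<Rightarrow> (('q \<times> 'q) \<Rightarrow> ('q \<times> 'q) \<Rightarrow> bool)
     \<Rightarrow> 'l dedge set \<Rightarrow> ('q \<Rightarrow> 'l dvert) \<Rightarrow> (('q \<times> 'q) \<Rightarrow> 'l dedge) \<Rightarrow> bool" where
  "tc_match L Es prec G F M \<longleftrightarrow>
     inj_on F (qverts Es) \<and>
     (\<forall>u \<in> qverts Es. vlabel (F u) = L u) \<and>
     (\<forall>e \<in> Es. M e \<in> G \<and> esrc (M e) = F (fst e) \<and> edst (M e) = F (snd e)) \<and>
     (\<forall>e \<in> Es. \<forall>e' \<in> Es. prec e e' \<longrightarrow> etime (M e) < etime (M e'))"

definition Preq :: "(('q \<times> 'q) \<Rightarrow> ('q \<times> 'q) \<Rightarrow> bool) \<Rightarrow> ('q \<times> 'q) set \<Rightarrow> ('q \<times> 'q) \<Rightarrow> ('q \<times> 'q) set" where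
  "Preq prec E e = {e' \<in> E. prec e' e} \<union> {e}"

definition discardable :: "('q \<Rightarrow> 'l) \<Rightarrow> ('q \<times> 'q) set \<Rightarrow> (('q \<times> 'q) \<Rightarrow> ('q \<times> 'q) \<Rightarrow> bool)
     \<Rightarrow> real \<Rightarrow> (nat \<Rightarrow> 'l dedge) \<Rightarrow> nat \<Rightarrow> bool" where
  "discardable L E prec W S i \<longleftrightarrow>
     (\<forall>S'. streaming_graph S' \<and> (\<forall>j \<le> i. S' j = S j) \<longrightarrow>
        (\<forall>k F M. tc_match L E prec (snapshot S' W k) F M \<longrightarrow> S i \<notin> M ` E))"

end

theory Submission
  imports Defs
begin

text \<open>
  If \<open>\<sigma>\<close> occurs as \<open>M \<epsilon>\<close> in a complete match, every edge matched to a predecessor of \<open>\<epsilon>\<close>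
  is older than \<open>\<sigma>\<close>, hence was already present and inside the window at \<open>t\<^sub>i\<close>, so restricting
  the match to \<open>Preq(\<epsilon>)\<close> gives a match in the current snapshot. Conversely, since \<open>Preq(\<epsilon>)\<close>
  is downward closed, a match of it can be completed by a future in which the missing query
  edges arrive right after \<open>t\<^sub>i\<close>, on fresh vertices, in the order of a linear extension of
  \<open>\<prec>\<close>, and so densely that the oldest edge of the partial match is still in the window.
\<close>

lemma streaming_graph_etime_less_iff:
  assumes "streaming_graph S"
  shows "etime (S a) < etime (S b) \<longleftrightarrow> a < b"
proof -
  have "strict_mono (\<lambda>j. etime (S j))"
    using assms unfolding streaming_graph_def strict_mono_Suc_iff by simp
  then show ?thesis using strict_mono_less[of "\<lambda>j. etime (S j)" a b] by simp
qed

lemma snapshot_memI: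
  assumes "streaming_graph S" and "j \<le> k" and "etime (S k) - W < etime (S j)"
  shows "S j \<in> snapshot S W k"
  using assms streaming_graph_etime_less_iff[OF assms(1), of k j] unfolding snapshot_def by force

lemma snapshot_etime:
  assumes "x \<in> snapshot S W k"
  shows "etime (S k) - W < etime x" and "etime x \<le> etime (S k)"
  using assms unfolding snapshot_def by blast+

lemma snapshot_memE:
  assumes "streaming_graph S" and "x \<in> snapshot S W k"
  obtains j where "j \<le> k" and "x = S j" and "etime (S k) - W < etime (S j)"
  using assms streaming_graph_etime_less_iff[OF assms(1), of k] unfolding snapshot_def
  by (force simp: not_less[symmetric])

definition continue_stream ::
    "(nat \<Rightarrow> 'l dedge) \<Rightarrow> nat \<Rightarrow> real \<Rightarrow> (nat \<Rightarrow> 'l dvert \<times> 'l dvert) \<Rightarrow> nat \<Rightarrow> 'l dedge" where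
  "continue_stream S i \<delta> V j =
     (if j \<le> i then S j else (fst (V j), snd (V j), etime (S i) + real (j - i) * \<delta>))"

lemma continue_stream_prefix: "j \<le> i \<Longrightarrow> continue_stream S i \<delta> V j = S j"
  unfolding continue_stream_def by simp

lemma continue_stream_future:
  "i < j \<Longrightarrow> continue_stream S i \<delta> V j = (fst (V j), snd (V j), etime (S i) + real (j - i) * \<delta>)"
  unfolding continue_stream_def by simp

lemma streaming_graph_continue_stream:
  assumes "streaming_graph S" and "\<delta> > 0"
  shows "streaming_graph (continue_stream S i \<delta> V)"
  unfolding streaming_graph_def
proof
  fix j
  consider "j < i" | "j = i" | "i < j" by linarith
  then show "etime (continue_stream S i \<delta> V j) < etime (continue_stream S i \<delta> V (Suc j))"
  proof cases
    case 1
    then show ?thesis using assms(1) by (simp add: continue_stream_prefix streaming_graph_def)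
  next
    case 2
    then show ?thesis using assms(2) by (simp add: continue_stream_def etime_def)
  next
    case 3
    then have "real (j - i) < real (Suc j - i)" by simp
    then show ?thesis using 3 assms(2) by (simp add: continue_stream_future etime_def)
  qed
qed

lemma streaming_graph_ex_continuation:
  fixes src dst :: "'e \<Rightarrow> 'l dvert"
  assumes "streaming_graph S" and "\<delta> > 0" and f: "inj_on f R"
  obtains S' where "streaming_graph S'" and "\<forall>j \<le> i. S' j = S j"
    and "\<And>e. e \<in> R \<Longrightarrow> S' (Suc i + f e) = (src e, dst e, etime (S i) + real (Suc (f e)) * \<delta>)"
    and "\<And>n. etime (S' (i + n)) = etime (S i) + real n * \<delta>"
proof -
  define V where "V j = (let e = inv_into R f (j - Suc i) in (src e, dst e))" for j
  define S' where "S' = continue_stream S i \<delta> V"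
  have "S' (Suc i + f e) = (src e, dst e, etime (S i) + real (Suc (f e)) * \<delta>)" if "e \<in> R" for e
    using inv_into_f_f[OF f that] unfolding S'_def V_def continue_stream_def by simp
  moreover have "etime (S' (i + n)) = etime (S i) + real n * \<delta>" for n
    unfolding S'_def continue_stream_def etime_def by simp
  ultimately show ?thesis
    using that streaming_graph_continue_stream[OF assms(1,2)] continue_stream_prefix
    unfolding S'_def by blast
qed

lemma finite_qverts: "finite Es \<Longrightarrow> finite (qverts Es)"
  unfolding qverts_def by simp

lemma qverts_mono: "A \<subseteq> B \<Longrightarrow> qverts A \<subseteq> qverts B"
  unfolding qverts_def by auto

lemma Preq_subset: "e \<in> E \<Longrightarrow> Preq prec E e \<subseteq> E"
  unfolding Preq_def by auto

lemma mem_Preq_self: "e \<in> Preq prec E e"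
  unfolding Preq_def by simp

lemma Preq_downward_closed:
  assumes "strict_po_on E prec" and "a \<in> E" and "b \<in> Preq prec E e" and "prec a b"
  shows "a \<in> Preq prec E e"
  using assms unfolding Preq_def strict_po_on_def by blast

lemma tc_match_subset:
  assumes "tc_match L Es prec G F M" and "Es' \<subseteq> Es" and "\<And>e. e \<in> Es' \<Longrightarrow> M e \<in> G'"
  shows "tc_match L Es' prec G' F M"
  using assms qverts_mono[OF assms(2)] inj_on_subset unfolding tc_match_def by blast

lemma tc_match_glue:
  assumes m: "tc_match L P prec G F M"
    and closed: "\<And>a b. a \<in> E \<Longrightarrow> b \<in> P \<Longrightarrow> prec a b \<Longrightarrow> a \<in> P"
    and inj: "inj_on F' (qverts E)" and agree: "\<And>u. u \<in> qverts P \<Longrightarrow> F' u = F u"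
    and label: "\<And>u. u \<in> qverts E - qverts P \<Longrightarrow> vlabel (F' u) = L u"
    and old: "\<And>e. e \<in> P \<Longrightarrow> M e \<in> G'"
    and new: "\<And>e. e \<in> E - P \<Longrightarrow> N e \<in> G' \<and> esrc (N e) = F' (fst e) \<and> edst (N e) = F' (snd e)"
    and old_new: "\<And>a b. a \<in> P \<Longrightarrow> b \<in> E - P \<Longrightarrow> etime (M a) < etime (N b)"
    and new_new: "\<And>a b. a \<in> E - P \<Longrightarrow> b \<in> E - P \<Longrightarrow> prec a b \<Longrightarrow> etime (N a) < etime (N b)"
  shows "tc_match L E prec G' F' (\<lambda>e. if e \<in> P then M e else N e)"
proof -
  have m_label: "\<And>u. u \<in> qverts P \<Longrightarrow> vlabel (F u) = L u"
    and m_ends: "\<And>e. e \<in> P \<Longrightarrow> esrc (M e) = F (fst e) \<and> edst (M e) = F (snd e)"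
    and m_order: "\<And>a b. a \<in> P \<Longrightarrow> b \<in> P \<Longrightarrow> prec a b \<Longrightarrow> etime (M a) < etime (M b)"
    using m unfolding tc_match_def by blast+
  have ends_P: "fst e \<in> qverts P" "snd e \<in> qverts P" if "e \<in> P" for e
    using that unfolding qverts_def by auto
  show ?thesis
    unfolding tc_match_def
  proof (intro conjI ballI impI)
    fix u assume "u \<in> qverts E"
    then show "vlabel (F' u) = L u" using label agree m_label by (cases "u \<in> qverts P") auto
  next
    fix a b assume "a \<in> E" "b \<in> E" "prec a b"
    then show "etime (if a \<in> P then M a else N a) < etime (if b \<in> P then M b else N b)"
      using closed[of a b] old_new[of a b] new_new[of a b] m_order[of a b]
      by (cases "a \<in> P"; cases "b \<in> P") simp_all
  next
    fix e assume "e \<in> E"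
    then show "(if e \<in> P then M e else N e) \<in> G'" using old new by simp
  next
    fix e assume "e \<in> E"
    then show "esrc (if e \<in> P then M e else N e) = F' (fst e)"
      using new m_ends agree ends_P by simp
  next
    fix e assume "e \<in> E"
    then show "edst (if e \<in> P then M e else N e) = F' (snd e)"
      using new m_ends agree ends_P by simp
  qed (fact inj)
qed

lemma strict_po_on_card_less:
  assumes "strict_po_on E prec" and "finite E" and "prec a b"
  shows "card {e \<in> E. prec e a} < card {e \<in> E. prec e b}"
proof (rule psubset_card_mono)
  show "finite {e \<in> E. prec e b}" using assms(2) by simp
  have "a \<in> {e \<in> E. prec e b} - {e \<in> E. prec e a}"
    using assms(1,3) unfolding strict_po_on_def by blast
  then show "{e \<in> E. prec e a} \<subset> {e \<in> E. prec e b}"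
    using assms(1,3) unfolding strict_po_on_def by blast
qed

text \<open>A linear extension of \<open>prec\<close>: sort by the number of predecessors, break ties by an
  arbitrary enumeration \<open>pos\<close> of \<open>E\<close>.\<close>

lemma strict_po_on_ex_inj_mono:
  assumes po: "strict_po_on E prec" and fin: "finite E"
  obtains f :: "'q \<times> 'q \<Rightarrow> nat" where "inj_on f E" and "\<And>a b. prec a b \<Longrightarrow> f a < f b"
proof -
  define N where "N = card E"
  obtain pos where pos: "bij_betw pos E {0..<N}"
    using ex_bij_betw_finite_nat[OF fin] N_def by blast
  then have pos_less: "pos e < N" if "e \<in> E" for e
    using that unfolding bij_betw_def by auto
  define r where "r e = card {e' \<in> E. prec e' e}" for e
  define f where "f e = pos e + N * r e" for e
  have "inj_on f E"
  proof (rule inj_onI)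
    fix a b assume "a \<in> E" "b \<in> E" "f a = f b"
    then have "f a mod N = f b mod N" "pos a mod N = pos a" "pos b mod N = pos b"
      using pos_less by simp_all
    then have "pos a = pos b" unfolding f_def by simp
    then show "a = b" using pos \<open>a \<in> E\<close> \<open>b \<in> E\<close> unfolding bij_betw_def inj_on_def by blast
  qed
  moreover have "f a < f b" if "prec a b" for a b
  proof -
    have "a \<in> E" using po that unfolding strict_po_on_def by blast
    have "N * Suc (r a) \<le> N * r b"
      using strict_po_on_card_less[OF po fin that] unfolding r_def by (intro mult_le_mono2) simp
    then show ?thesis using pos_less[OF \<open>a \<in> E\<close>] unfolding f_def by simp
  qed
  ultimately show ?thesis using that by blast
qed

lemma inj_on_extend_fresh:
  fixes F :: "'q \<Rightarrow> nat \<times> 'l"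
  assumes "finite B" and "finite A" and "inj_on F A"
  obtains F' where "inj_on F' B" and "\<And>u. u \<in> A \<Longrightarrow> F' u = F u"
    and "\<And>u. u \<in> B - A \<Longrightarrow> snd (F' u) = L u"
proof -
  obtain code :: "'q \<Rightarrow> nat" where code: "inj_on code B"
    using ex_bij_betw_finite_nat[OF assms(1)] bij_betw_imp_inj_on by blast
  define base where "base = Suc (Max (insert 0 (fst ` F ` A)))"
  have below: "fst (F u) < base" if "u \<in> A" for u
    unfolding base_def using assms(2) that by (simp add: le_imp_less_Suc)
  define F' where "F' u = (if u \<in> A then F u else (base + code u, L u))" for u
  have below_base_iff: "fst (F' u) < base \<longleftrightarrow> u \<in> A" for u
    using below unfolding F'_def by simp
  have "inj_on F' B"
  proof (rule inj_onI)
    fix u v assume "u \<in> B" "v \<in> B" "F' u = F' v"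
    moreover from \<open>F' u = F' v\<close> have "u \<in> A \<longleftrightarrow> v \<in> A" using below_base_iff by metis
    ultimately show "u = v"
      using assms(3) code unfolding F'_def inj_on_def by (cases "u \<in> A") auto
  qed
  then show ?thesis using that unfolding F'_def by simp
qed

lemma ex_step_below_Min:
  fixes g :: "'a \<Rightarrow> real"
  assumes "finite A" and "\<And>x. x \<in> A \<Longrightarrow> c < g x" and "c < t"
  obtains \<delta> where "\<delta> > 0" and "c + real n * \<delta> < t" and "\<And>x. x \<in> A \<Longrightarrow> c + real n * \<delta> < g x"
proof -
  define m where "m = Min (insert t (g ` A))"
  have m_le: "m \<le> t" "\<And>x. x \<in> A \<Longrightarrow> m \<le> g x"
    unfolding m_def using assms(1) by auto
  have "c < m" unfolding m_def using assms by simp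
  define \<delta> where "\<delta> = (m - c) / (real n + 1)"
  have "\<delta> > 0" using \<open>c < m\<close> unfolding \<delta>_def by simp
  have "real n * \<delta> = (m - c) * (real n / (real n + 1))" unfolding \<delta>_def by simp
  also have "\<dots> < (m - c) * 1" using \<open>c < m\<close> by (intro mult_strict_left_mono) auto
  finally have "c + real n * \<delta> < m" by simp
  then show ?thesis using that \<open>\<delta> > 0\<close> m_le by fastforce
qed

lemma streaming_graph_ex_continuation_in_window:
  fixes src dst :: "'e \<Rightarrow> 'l dvert"
  assumes sg: "streaming_graph S" and W: "W > 0" and A: "finite A" "A \<subseteq> snapshot S W i"
    and f: "inj_on f R" and n: "\<And>e. e \<in> R \<Longrightarrow> f e < n"
  obtains S' where "streaming_graph S'" and "\<forall>j \<le> i. S' j = S j"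
    and "A \<subseteq> snapshot S' W (i + n)"
    and "\<And>e. e \<in> R \<Longrightarrow> S' (Suc i + f e) \<in> snapshot S' W (i + n)
          \<and> esrc (S' (Suc i + f e)) = src e \<and> edst (S' (Suc i + f e)) = dst e"
    and "\<And>e. e \<in> R \<Longrightarrow> etime (S i) < etime (S' (Suc i + f e))"
    and "\<And>a b. a \<in> R \<Longrightarrow> b \<in> R \<Longrightarrow> f a < f b \<Longrightarrow>
          etime (S' (Suc i + f a)) < etime (S' (Suc i + f b))"
proof -
  define t where "t = etime (S i)"
  have "t - W < etime x" if "x \<in> A" for x using snapshot_etime(1) A(2) that unfolding t_def by blast
  moreover have "t - W < t" using W by simp
  ultimately obtain \<delta> where \<delta>: "\<delta> > 0" "t - W + real n * \<delta> < t"
    and stays: "\<And>x. x \<in> A \<Longrightarrow> t - W + real n * \<delta> < etime x"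
    using ex_step_below_Min[OF A(1), of "t - W" etime t n] by blast
  obtain S' where sg': "streaming_graph S'" and agree: "\<forall>j \<le> i. S' j = S j"
    and S'_new: "\<And>e. e \<in> R \<Longrightarrow> S' (Suc i + f e) = (src e, dst e, t + real (Suc (f e)) * \<delta>)"
    and window: "etime (S' (i + n)) - W = t - W + real n * \<delta>"
    using streaming_graph_ex_continuation[OF sg \<delta>(1) f, of i src dst] unfolding t_def
    by (metis diff_add_eq)
  show ?thesis
  proof (rule that[OF sg' agree])
    show "A \<subseteq> snapshot S' W (i + n)"
    proof
      fix x assume "x \<in> A"
      then obtain j where j: "j \<le> i" "x = S j" using snapshot_memE[OF sg] A(2) by blast
      then have "etime (S' (i + n)) - W < etime (S' j)" using agree stays[OF \<open>x \<in> A\<close>] window by simp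
      then show "x \<in> snapshot S' W (i + n)" using snapshot_memI[OF sg', of j "i + n" W] j agree by simp
    qed
  next
    fix e assume e: "e \<in> R"
    have "t < t + real (Suc (f e)) * \<delta>" using \<delta>(1) by simp
    then show later: "etime (S i) < etime (S' (Suc i + f e))"
      using S'_new[OF e] unfolding t_def etime_def by simp
    have "etime (S' (i + n)) - W < etime (S' (Suc i + f e))"
      using \<delta>(2) later window unfolding t_def by simp
    moreover have "Suc i + f e \<le> i + n" using n[OF e] by simp
    ultimately have "S' (Suc i + f e) \<in> snapshot S' W (i + n)" by (rule snapshot_memI[OF sg', rotated])
    then show "S' (Suc i + f e) \<in> snapshot S' W (i + n)
        \<and> esrc (S' (Suc i + f e)) = src e \<and> edst (S' (Suc i + f e)) = dst e"
      using S'_new[OF e] by (simp add: esrc_def edst_def)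
  next
    fix a b assume "a \<in> R" "b \<in> R" "f a < f b"
    then show "etime (S' (Suc i + f a)) < etime (S' (Suc i + f b))"
      using S'_new \<delta>(1) by (simp add: etime_def)
  qed
qed

lemma Preq_match_of_complete_match:
  assumes sg: "streaming_graph S" and W: "W > 0"
    and sg': "streaming_graph S'" and agree: "\<forall>j \<le> i. S' j = S j"
    and m: "tc_match L E prec (snapshot S' W k) F M" and eE: "e \<in> E" and Me: "M e = S i"
  shows "tc_match L (Preq prec E e) prec (snapshot S W i) F M"
proof (rule tc_match_subset[OF m Preq_subset[OF eE]])
  have m_snap: "\<And>e. e \<in> E \<Longrightarrow> M e \<in> snapshot S' W k"
    and m_order: "\<And>a b. a \<in> E \<Longrightarrow> b \<in> E \<Longrightarrow> prec a b \<Longrightarrow> etime (M a) < etime (M b)"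
    using m unfolding tc_match_def by blast+
  have ik: "etime (S' i) \<le> etime (S' k)" using snapshot_etime(2)[OF m_snap[OF eE]] Me agree by simp
  fix e' assume e': "e' \<in> Preq prec E e"
  show "M e' \<in> snapshot S W i"
  proof (cases "e' = e")
    case True
    then show ?thesis using Me W snapshot_memI[OF sg, of i i W] by simp
  next
    case False
    then have "prec e' e" "e' \<in> E" using e' unfolding Preq_def by auto
    then have older: "etime (M e') < etime (S' i)" using m_order[of e' e] eE Me agree by simp
    obtain j where j: "M e' = S' j" "etime (S' k) - W < etime (S' j)"
      using snapshot_memE[OF sg' m_snap[OF \<open>e' \<in> E\<close>]] by metis
    then have "j < i" using older streaming_graph_etime_less_iff[OF sg', of j i] by simp
    then have "S' j = S j" "S' i = S i" using agree by simp_all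
    then have "etime (S i) - W < etime (S j)" using ik j(2) by simp
    then show ?thesis using snapshot_memI[OF sg, of j i W] \<open>j < i\<close> j(1) \<open>S' j = S j\<close> by simp
  qed
qed

lemma not_discardable_of_Preq_match:
  assumes sg: "streaming_graph S" and W: "W > 0" and fin: "finite E" and po: "strict_po_on E prec"
    and eE: "\<epsilon> \<in> E" and m: "tc_match L (Preq prec E \<epsilon>) prec (snapshot S W i) F M"
    and Me: "M \<epsilon> = S i"
  shows "\<not> discardable L E prec W S i"
proof -
  define P where "P = Preq prec E \<epsilon>"
  have "P \<subseteq> E" unfolding P_def using Preq_subset[OF eE] .
  then have finP: "finite P" using fin finite_subset by blast
  have m_inj: "inj_on F (qverts P)" and m_snap: "M ` P \<subseteq> snapshot S W i"
    using m unfolding P_def tc_match_def by blast+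
  obtain f :: "_ \<Rightarrow> nat" where f_inj: "inj_on f E" and f_mono: "\<And>a b. prec a b \<Longrightarrow> f a < f b"
    using strict_po_on_ex_inj_mono[OF po fin] by blast
  obtain n where n: "\<And>e. e \<in> E \<Longrightarrow> f e < n"
    using finite_nat_set_iff_bounded[of "f ` E"] fin by auto
  obtain F' where F'_inj: "inj_on F' (qverts E)" and F'_old: "\<And>u. u \<in> qverts P \<Longrightarrow> F' u = F u"
    and F'_label: "\<And>u. u \<in> qverts E - qverts P \<Longrightarrow> snd (F' u) = L u"
    using inj_on_extend_fresh[OF finite_qverts[OF fin] finite_qverts[OF finP] m_inj, where L = L] by blast
  obtain S' where sg': "streaming_graph S'" and agree: "\<forall>j \<le> i. S' j = S j"
    and old: "M ` P \<subseteq> snapshot S' W (i + n)"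
    and new: "\<And>e. e \<in> E \<Longrightarrow> S' (Suc i + f e) \<in> snapshot S' W (i + n)
          \<and> esrc (S' (Suc i + f e)) = F' (fst e) \<and> edst (S' (Suc i + f e)) = F' (snd e)"
    and later: "\<And>e. e \<in> E \<Longrightarrow> etime (S i) < etime (S' (Suc i + f e))"
    and ordered: "\<And>a b. a \<in> E \<Longrightarrow> b \<in> E \<Longrightarrow> f a < f b \<Longrightarrow>
          etime (S' (Suc i + f a)) < etime (S' (Suc i + f b))"
    using streaming_graph_ex_continuation_in_window[OF sg W finite_imageI[OF finP] m_snap f_inj n,
        of "\<lambda>e. F' (fst e)" "\<lambda>e. F' (snd e)"] by blast
  let ?M' = "\<lambda>e. if e \<in> P then M e else S' (Suc i + f e)"
  have "tc_match L E prec (snapshot S' W (i + n)) F' ?M'"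
  proof (rule tc_match_glue[OF m[folded P_def] _ F'_inj F'_old])
    fix a b assume "a \<in> E" "b \<in> P" "prec a b"
    then show "a \<in> P" using Preq_downward_closed[OF po] unfolding P_def by blast
  next
    fix a b assume "a \<in> P" "b \<in> E - P"
    then show "etime (M a) < etime (S' (Suc i + f b))"
      using snapshot_etime(2) m_snap later[of b] by (meson DiffD1 image_subset_iff order.strict_trans1)
  qed (use old new ordered f_mono F'_label in \<open>auto simp: vlabel_def\<close>)
  moreover have "S i \<in> ?M' ` E"
    using eE Me mem_Preq_self[of \<epsilon> prec E] unfolding P_def by (intro image_eqI[of _ _ \<epsilon>]) simp_all
  ultimately show ?thesis unfolding discardable_def using sg' agree by blast
qed

theorem lemma1:
  fixes L :: "'q \<Rightarrow> 'l" and E :: "('q \<times> 'q) set"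
    and prec :: "('q \<times> 'q) \<Rightarrow> ('q \<times> 'q) \<Rightarrow> bool"
    and W :: real and S :: "nat \<Rightarrow> 'l dedge" and i :: nat
  assumes "streaming_graph S" and "W > 0" and "finite E" and "strict_po_on E prec"
  shows "\<not> discardable L E prec W S i \<longleftrightarrow>
    (\<exists>\<epsilon> \<in> E. \<exists>F M. tc_match L (Preq prec E \<epsilon>) prec (snapshot S W i) F M \<and> M \<epsilon> = S i)"
proof
  assume "\<not> discardable L E prec W S i"
  then obtain S' k F M where "streaming_graph S'" "\<forall>j \<le> i. S' j = S j"
    "tc_match L E prec (snapshot S' W k) F M" "S i \<in> M ` E"
    unfolding discardable_def by blast
  moreover from \<open>S i \<in> M ` E\<close> obtain e where "e \<in> E" "M e = S i" by auto
  ultimately show "\<exists>\<epsilon> \<in> E. \<exists>F M. tc_match L (Preq prec E \<epsilon>) prec (snapshot S W i) F M \<and> M \<epsilon> = S i"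
    using Preq_match_of_complete_match[OF assms(1,2)] by blast
next
  assume "\<exists>\<epsilon> \<in> E. \<exists>F M. tc_match L (Preq prec E \<epsilon>) prec (snapshot S W i) F M \<and> M \<epsilon> = S i"
  then show "\<not> discardable L E prec W S i" using not_discardable_of_Preq_match[OF assms] by blast
qed

end
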